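(* Let $A$ be a finite alphabet, $E\subseteq W(A)$ and $\vec s\in V^\infty(A)$ such that $E$ is large in $\vec s$. Let $r\ge 2$ and $E=\bigcup_{i=1}^r E_i$. Then there exist $1\le i\le r$ and $\vec t\in V^\infty(A)$ with $\vec t\le\vec s$ such that $E_i$ is large in $\vec t$.
   Context: $\mathbb N=\{0,1,2,\dots\}$. Let $A$ be a finite nonempty alphabet. $W(A)$ denotes the set of all finite words over $A$, including the empty word; words are concatenated by juxtaposition. Fix a symbol $x\notin A$. A variable word over $A$ is a finite word over $A\cup\{x\}$ in which $x$ occurs at least once; $V(A)$ is the set of variable words. For $s(x)\in V(A)$ and $a\in A\cup\{x\}$, $s(a)$ is obtained by replacing every occurrence of $x$ by $a$. $V^\infty(A)$ is the set of infinite sequences of variable words. For a sequence $(s_n(x))_{n\in I}$ of variable words indexed by a set $I\subseteq\mathbb N$ that is either a finite interval or of the form $\{m,m+1,\dots\}$: the constant span $\langle (s_n(x))_{n\in I}\rangle_c$ is the set of all words $s_{l_0}(a_0)s_{l_1}(a_1)\cdots s_{l_j}(a_j)$ with $j\ge 0$, $l_0<\dots<l_j$ in $I$ and $a_0,\dots,a_j\in A$; the variable span $\langle (s_n(x))_{n\in I}\rangle_v$ is the set of all words $s_{l_0}(a_0)\cdots s_{l_j}(a_j)$ with $j\ge0$, $l_0<\dots<l_j$ in $I$, $a_0,\dots,a_j\in A\cup\{x\}$ and at least one $a_i=x$. Extracted subsequences: let $\vec s=(s_n(x))_{n=0}^\infty\in V^\infty(A)$. A finite sequence $(t_n(x))_{n=0}^l$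 of variable words is an extracted subsequence of $\vec s$ if there exist integers $0=m_0<m_1<\dots<m_{l+1}$ with $t_i(x)\in\langle (s_n(x))_{n=m_i}^{m_{i+1}-1}\rangle_v$ for all $0\le i\le l$. An infinite sequence $\vec t=(t_n(x))_{n=0}^\infty$ is an extracted subsequence of $\vec s$ if every initial segment $(t_n(x))_{n=0}^l$ is a finite extracted subsequence of $\vec s$. We write $\vec t\le\vec s$. A set $E\subseteq W(A)$ is large in $\vec s\in V^\infty(A)$ if $E\cap\langle\vec w\rangle_c\neq\emptyset$ for every infinite extracted subsequence $\vec w$ of $\vec s$. *)

theory Defs
  imports Main
begin

text \<open>Encoding: the alphabet A is a set of type 'a; letters of A \<union> {x} are
  represented in 'a option, with None standing for the variable x and Some a for a \<in> A.\<close>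

definition is_word :: "'a set \<Rightarrow> 'a list \<Rightarrow> bool" where
  "is_word A w \<longleftrightarrow> set w \<subseteq> A"

definition is_varword :: "'a set \<Rightarrow> 'a option list \<Rightarrow> bool" where
  "is_varword A s \<longleftrightarrow> set s \<subseteq> Some ` A \<union> {None} \<and> None \<in> set s"

definition subst_c :: "'a option list \<Rightarrow> 'a \<Rightarrow> 'a list" where
  "subst_c s a = map (\<lambda>c. case c of None \<Rightarrow> a | Some b \<Rightarrow> b) s"

definition subst_v :: "'a option list \<Rightarrow> 'a option \<Rightarrow> 'a option list" where
  "subst_v s c = map (\<lambda>y. case y of None \<Rightarrow> c | Some b \<Rightarrow> Some b) s"

definition is_vseq :: "'a set \<Rightarrow> (nat \<Rightarrow> 'a option list) \<Rightarrow> bool" where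
  "is_vseq A s \<longleftrightarrow> (\<forall>n. is_varword A (s n))"

definition cspan :: "'a set \<Rightarrow> (nat \<Rightarrow> 'a option list) \<Rightarrow> nat set \<Rightarrow> 'a list set" where
  "cspan A s I = {w. \<exists>ls as. ls \<noteq> [] \<and> sorted_wrt (<) ls \<and> set ls \<subseteq> I \<and>
      length as = length ls \<and> set as \<subseteq> A \<and>
      w = concat (map2 (\<lambda>l a. subst_c (s l) a) ls as)}"

definition vspan :: "'a set \<Rightarrow> (nat \<Rightarrow> 'a option list) \<Rightarrow> nat set \<Rightarrow> 'a option list set" where
  "vspan A s I = {w. \<exists>ls as. ls \<noteq> [] \<and> sorted_wrt (<) ls \<and> set ls \<subseteq> I \<and>
      length as = length ls \<and> set as \<subseteq> Some ` A \<union> {None} \<and> None \<in> set as \<and>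
      w = concat (map2 (\<lambda>l c. subst_v (s l) c) ls as)}"

definition extracted :: "'a set \<Rightarrow> (nat \<Rightarrow> 'a option list) \<Rightarrow> (nat \<Rightarrow> 'a option list) \<Rightarrow> bool" where
  "extracted A t s \<longleftrightarrow> (\<forall>l. \<exists>m :: nat \<Rightarrow> nat. m 0 = 0 \<and> (\<forall>i\<le>l. m i < m (Suc i)) \<and>
      (\<forall>i\<le>l. t i \<in> vspan A s {m i..<m (Suc i)}))"

definition large :: "'a set \<Rightarrow> 'a list set \<Rightarrow> (nat \<Rightarrow> 'a option list) \<Rightarrow> bool" where
  "large A E s \<longleftrightarrow> (\<forall>w. is_vseq A w \<and> extracted A w s \<longrightarrow> E \<inter> cspan A w UNIV \<noteq> {})"

end

theory Submission
  imports Defs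
begin

(* Suppose no colour class E_i is large in any extracted subsequence of s.
   Then, going through the classes one at a time, we can pass to ever deeper extracted
   subsequences w of s whose constant span avoids E_1, ..., E_k: if E_i is not large in the
   current w, some w' <= w has a constant span missing E_i, and the constant span of w' is
   contained in that of w, so the classes avoided earlier stay avoided.  At the end the
   constant span of some w <= s misses all of E, contradicting largeness of E in s.

   Two facts about extraction carry this argument: extraction is transitive, and the
   constant span shrinks along extraction.  Both are instances of a single substitution
   principle: a word of the (variable or constant) span of t, where every t_k lies in the
   variable span of s over a block of indices and the blocks are ordered, lies in the
   corresponding span of s.  To prove it, span elements are represented by "patterns",
   strictly increasing lists of (index, letter) pairs, and patterns are composed. *)

definition pattern :: "nat set \<Rightarrow> 'b set \<Rightarrow> (nat \<times> 'b) list \<Rightarrow> bool" where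
  "pattern I L ps \<longleftrightarrow> ps \<noteq> [] \<and> sorted_wrt (<) (map fst ps) \<and> set ps \<subseteq> I \<times> L"

definition realize :: "('w \<Rightarrow> 'b \<Rightarrow> 'c list) \<Rightarrow> (nat \<Rightarrow> 'w) \<Rightarrow> (nat \<times> 'b) list \<Rightarrow> 'c list" where
  "realize G s ps = concat (map (\<lambda>(l, c). G (s l) c) ps)"

lemma span_as_pattern:
  "(\<exists>ls as. ls \<noteq> [] \<and> sorted_wrt (<) ls \<and> set ls \<subseteq> I \<and> length as = length ls \<and>
      set as \<subseteq> L \<and> P as \<and> w = concat (map2 (\<lambda>l c. G (s l) c) ls as))
   \<longleftrightarrow> (\<exists>ps. pattern I L ps \<and> P (map snd ps) \<and> w = realize G s ps)"
proof
  assume "\<exists>ls as. ls \<noteq> [] \<and> sorted_wrt (<) ls \<and> set ls \<subseteq> I \<and> length as = length ls \<and>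
      set as \<subseteq> L \<and> P as \<and> w = concat (map2 (\<lambda>l c. G (s l) c) ls as)"
  then obtain ls as where h: "ls \<noteq> []" "sorted_wrt (<) ls" "set ls \<subseteq> I" "length as = length ls"
      "set as \<subseteq> L" "P as" "w = concat (map2 (\<lambda>l c. G (s l) c) ls as)" by blast
  have "set (zip ls as) \<subseteq> I \<times> L" using h(3,5) by (auto dest: set_zip_leftD set_zip_rightD)
  with h show "\<exists>ps. pattern I L ps \<and> P (map snd ps) \<and> w = realize G s ps"
    by (intro exI[of _ "zip ls as"]) (auto simp: pattern_def realize_def)
next
  assume "\<exists>ps. pattern I L ps \<and> P (map snd ps) \<and> w = realize G s ps"
  then obtain ps where "pattern I L ps" "P (map snd ps)" "w = realize G s ps" by blast
  then show "\<exists>ls as. ls \<noteq> [] \<and> sorted_wrt (<) ls \<and> set ls \<subseteq> I \<and> length as = length ls \<and>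
      set as \<subseteq> L \<and> P as \<and> w = concat (map2 (\<lambda>l c. G (s l) c) ls as)"
    by (intro exI[of _ "map fst ps"] exI[of _ "map snd ps"])
       (auto simp: pattern_def realize_def zip_map_fst_snd)
qed

lemma vspan_iff:
  "w \<in> vspan A s I \<longleftrightarrow>
     (\<exists>ps. pattern I (Some ` A \<union> {None}) ps \<and> None \<in> snd ` set ps \<and> w = realize subst_v s ps)"
  unfolding vspan_def mem_Collect_eq
  using span_as_pattern[where P = "\<lambda>as. None \<in> set as" and G = subst_v] by simp

lemma cspan_iff:
  "w \<in> cspan A s I \<longleftrightarrow> (\<exists>ps. pattern I A ps \<and> w = realize subst_c s ps)"
  unfolding cspan_def mem_Collect_eq
  using span_as_pattern[where P = "\<lambda>_. True" and G = subst_c] by simp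

(* Substituting, for every entry (k, c) of the pattern ps, the pattern Q k with each of its
   letters d replaced by H d c, the letter that the position of d receives in (s_k)(c). *)
definition compose ::
    "('d \<Rightarrow> 'b \<Rightarrow> 'b) \<Rightarrow> (nat \<Rightarrow> (nat \<times> 'd) list) \<Rightarrow> (nat \<times> 'b) list \<Rightarrow> (nat \<times> 'b) list" where
  "compose H Q ps = concat (map (\<lambda>(k, c). map (\<lambda>(j, d). (j, H d c)) (Q k)) ps)"

lemma mem_compose:
  "(j, e) \<in> set (compose H Q ps) \<longleftrightarrow> (\<exists>k c d. (k, c) \<in> set ps \<and> (j, d) \<in> set (Q k) \<and> e = H d c)"
  by (auto simp: compose_def) force

lemma map_fst_compose: "map fst (compose H Q ps) = concat (map (\<lambda>(k, c). map fst (Q k)) ps)"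
  by (induction ps) (auto simp: compose_def case_prod_beta o_def)

lemma sorted_compose:
  assumes "sorted_wrt (<) (map fst ps)"
    and "\<And>k. k \<in> fst ` set ps \<Longrightarrow> sorted_wrt (<) (map fst (Q k)) \<and> fst ` set (Q k) \<subseteq> B k"
    and "\<And>k k' j j'. k \<in> fst ` set ps \<Longrightarrow> k' \<in> fst ` set ps \<Longrightarrow> k < k' \<Longrightarrow>
           j \<in> B k \<Longrightarrow> j' \<in> B k' \<Longrightarrow> j < j'"
  shows "sorted_wrt (<) (map fst (compose H Q ps))"
  using assms unfolding map_fst_compose
proof (induction ps)
  case Nil
  then show ?case by simp
next
  case (Cons p ps)
  obtain k c where p: "p = (k, c)" by force
  have k: "k \<in> fst ` set (p # ps)" by (simp add: p)
  have "j < j'" if j: "j \<in> fst ` set (Q k)" and "j' \<in> set (concat (map (\<lambda>(k, c). map fst (Q k)) ps))"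
    for j j'
  proof -
    from that(2) obtain k' c' where k': "(k', c') \<in> set ps" "j' \<in> fst ` set (Q k')" by auto
    have k'_mem: "k' \<in> fst ` set (p # ps)" using k'(1) by force
    have "k < k'" using Cons.prems(1) p k'(1) by force
    moreover have "j \<in> B k" "j' \<in> B k'"
      using Cons.prems(2)[OF k] Cons.prems(2)[OF k'_mem] j k'(2) by blast+
    ultimately show "j < j'" by (rule Cons.prems(3)[OF k k'_mem])
  qed
  moreover have "sorted_wrt (<) (map fst (Q k))" using Cons.prems(2)[OF k] by simp
  moreover have "sorted_wrt (<) (concat (map (\<lambda>(k, c). map fst (Q k)) ps))"
  proof (rule Cons.IH)
    show "sorted_wrt (<) (map fst ps)" using Cons.prems(1) by simp
    show "sorted_wrt (<) (map fst (Q k)) \<and> fst ` set (Q k) \<subseteq> B k" if "k \<in> fst ` set ps" for k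
      using that by (intro Cons.prems(2)[of k]) auto
    show "j < j'" if "k \<in> fst ` set ps" "k' \<in> fst ` set ps" "k < k'" "j \<in> B k" "j' \<in> B k'"
      for k k' j j'
      using that by (intro Cons.prems(3)[of k k' j j']) auto
  qed
  ultimately show ?case by (simp add: p sorted_wrt_append)
qed

lemma realize_compose:
  assumes G_concat: "\<And>xs c. G (concat xs) c = concat (map (\<lambda>x. G x c) xs)"
    and G_subst: "\<And>x d c. G (subst_v x d) c = G x (H d c)"
    and "\<And>k. k \<in> fst ` set ps \<Longrightarrow> t k = realize subst_v s (Q k)"
  shows "realize G t ps = realize G s (compose H Q ps)"
  using assms(3)
proof (induction ps)
  case Nil
  then show ?case by (simp add: realize_def compose_def)
next
  case (Cons p ps)
  obtain k c where p: "p = (k, c)" by force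
  have "G (t k) c = realize G s (map (\<lambda>(j, d). (j, H d c)) (Q k))"
    using Cons.prems[of k]
    by (simp add: p realize_def G_concat G_subst map_concat case_prod_beta o_def)
  with Cons p show ?case by (simp add: realize_def compose_def)
qed

lemma pattern_compose:
  assumes ps: "pattern I L ps"
    and Q: "\<And>k. k \<in> I \<Longrightarrow> pattern {m k..<m (Suc k)} (Some ` A \<union> {None}) (Q k)"
    and blocks: "\<And>k k'. k \<in> I \<Longrightarrow> k' \<in> I \<Longrightarrow> k < k' \<Longrightarrow> m (Suc k) \<le> m k'"
    and H: "\<And>d c. d \<in> Some ` A \<union> {None} \<Longrightarrow> c \<in> L \<Longrightarrow> H d c \<in> L"
  shows "pattern (\<Union>k\<in>I. {m k..<m (Suc k)}) L (compose H Q ps)"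
proof -
  have ps_I: "k \<in> I" if "k \<in> fst ` set ps" for k using ps that by (auto simp: pattern_def)
  obtain k c ps' where "ps = (k, c) # ps'" using ps by (cases ps) (auto simp: pattern_def)
  moreover obtain j d q' where "Q k = (j, d) # q'"
    using Q[OF ps_I[of k]] \<open>ps = (k, c) # ps'\<close> by (cases "Q k") (auto simp: pattern_def)
  ultimately have "(j, H d c) \<in> set (compose H Q ps)"
    unfolding mem_compose by (intro exI[of _ k] exI[of _ c] exI[of _ d]) simp
  hence nonempty: "compose H Q ps \<noteq> []" by auto
  have sorted: "sorted_wrt (<) (map fst (compose H Q ps))"
  proof (rule sorted_compose[where B = "\<lambda>k. {m k..<m (Suc k)}"])
    show "sorted_wrt (<) (map fst ps)" using ps by (simp add: pattern_def)
    show "sorted_wrt (<) (map fst (Q k)) \<and> fst ` set (Q k) \<subseteq> {m k..<m (Suc k)}"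
      if "k \<in> fst ` set ps" for k
      using Q[OF ps_I[OF that]] by (auto simp: pattern_def)
    show "j < j'" if "k \<in> fst ` set ps" "k' \<in> fst ` set ps" "k < k'"
      "j \<in> {m k..<m (Suc k)}" "j' \<in> {m k'..<m (Suc k')}" for k k' j j'
      using blocks[OF ps_I[OF that(1)] ps_I[OF that(2)] that(3)] that(4,5) by simp
  qed
  have "set (compose H Q ps) \<subseteq> (\<Union>k\<in>I. {m k..<m (Suc k)}) \<times> L"
  proof (clarsimp simp: mem_compose)
    fix j k c d assume kc: "(k, c) \<in> set ps" and jd: "(j, d) \<in> set (Q k)"
    have k: "k \<in> I" and c: "c \<in> L" using ps kc by (auto simp: pattern_def)
    have "j \<in> {m k..<m (Suc k)}" "d \<in> Some ` A \<union> {None}"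
      using Q[OF k] jd by (auto simp: pattern_def)
    with k c H show "(\<exists>k\<in>I. m k \<le> j \<and> j < m (Suc k)) \<and> H d c \<in> L" by auto
  qed
  with nonempty sorted show ?thesis by (simp add: pattern_def)
qed

definition letter_v :: "'a option \<Rightarrow> 'a option \<Rightarrow> 'a option" where
  "letter_v d c = (case d of None \<Rightarrow> c | Some b \<Rightarrow> Some b)"

definition letter_c :: "'a option \<Rightarrow> 'a \<Rightarrow> 'a" where
  "letter_c d a = (case d of None \<Rightarrow> a | Some b \<Rightarrow> b)"

lemma subst_v_concat: "subst_v (concat xs) c = concat (map (\<lambda>x. subst_v x c) xs)"
  by (simp add: subst_v_def map_concat)

lemma subst_v_subst_v: "subst_v (subst_v x d) c = subst_v x (letter_v d c)"
  by (auto simp: subst_v_def letter_v_def split: option.split)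

lemma subst_c_concat: "subst_c (concat xs) a = concat (map (\<lambda>x. subst_c x a) xs)"
  by (simp add: subst_c_def map_concat)

lemma subst_c_subst_v: "subst_c (subst_v x d) a = subst_c x (letter_c d a)"
  by (auto simp: subst_v_def subst_c_def letter_c_def split: option.split)

lemma vspan_patterns:
  assumes "\<And>k. k \<in> I \<Longrightarrow> t k \<in> vspan A s (B k)"
  obtains Q where "\<And>k. k \<in> I \<Longrightarrow> pattern (B k) (Some ` A \<union> {None}) (Q k)"
    and "\<And>k. k \<in> I \<Longrightarrow> None \<in> snd ` set (Q k)"
    and "\<And>k. k \<in> I \<Longrightarrow> t k = realize subst_v s (Q k)"
proof -
  have "\<forall>k\<in>I. \<exists>q. pattern (B k) (Some ` A \<union> {None}) q \<and> None \<in> snd ` set q \<and>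
          t k = realize subst_v s q"
    using assms by (simp add: vspan_iff)
  then obtain Q where "\<forall>k\<in>I. pattern (B k) (Some ` A \<union> {None}) (Q k) \<and>
          None \<in> snd ` set (Q k) \<and> t k = realize subst_v s (Q k)"
    by (rule bchoice[elim_format]) blast
  then show thesis using that by blast
qed

lemma vspan_compose:
  assumes t: "\<And>k. k \<in> I \<Longrightarrow> t k \<in> vspan A s {m k..<m (Suc k)}"
    and blocks: "\<And>k k'. k \<in> I \<Longrightarrow> k' \<in> I \<Longrightarrow> k < k' \<Longrightarrow> m (Suc k) \<le> m k'"
  shows "vspan A t I \<subseteq> vspan A s (\<Union>k\<in>I. {m k..<m (Suc k)})"
proof
  fix w assume "w \<in> vspan A t I"
  then obtain ps where ps: "pattern I (Some ` A \<union> {None}) ps" "None \<in> snd ` set ps"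
    and w: "w = realize subst_v t ps" by (auto simp: vspan_iff)
  obtain Q where Q: "\<And>k. k \<in> I \<Longrightarrow> pattern {m k..<m (Suc k)} (Some ` A \<union> {None}) (Q k)"
    and Q_var: "\<And>k. k \<in> I \<Longrightarrow> None \<in> snd ` set (Q k)"
    and Q_t: "\<And>k. k \<in> I \<Longrightarrow> t k = realize subst_v s (Q k)"
    using vspan_patterns[where B = "\<lambda>k. {m k..<m (Suc k)}", OF t] by blast
  have ps_I: "k \<in> I" if "k \<in> fst ` set ps" for k using ps(1) that by (auto simp: pattern_def)
  have "pattern (\<Union>k\<in>I. {m k..<m (Suc k)}) (Some ` A \<union> {None}) (compose letter_v Q ps)"
    by (rule pattern_compose[where m = m and Q = Q, OF ps(1) Q blocks]) (auto simp: letter_v_def split: option.split)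
  moreover have "None \<in> snd ` set (compose letter_v Q ps)"
  proof -
    obtain k where k: "(k, None) \<in> set ps" using ps(2) by force
    hence "k \<in> I" using ps(1) by (auto simp: pattern_def)
    then obtain j where "(j, None) \<in> set (Q k)" using Q_var[of k] by force
    with k have "(j, None) \<in> set (compose letter_v Q ps)"
      unfolding mem_compose by (intro exI[of _ k] exI[of _ None]) (auto simp: letter_v_def)
    then show ?thesis by force
  qed
  moreover have "w = realize subst_v s (compose letter_v Q ps)"
    unfolding w using subst_v_concat subst_v_subst_v Q_t[OF ps_I] by (rule realize_compose)
  ultimately show "w \<in> vspan A s (\<Union>k\<in>I. {m k..<m (Suc k)})" by (auto simp: vspan_iff)
qed


lemma cspan_compose:
  assumes t: "\<And>k. k \<in> I \<Longrightarrow> t k \<in> vspan A s {m k..<m (Suc k)}"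
    and blocks: "\<And>k k'. k \<in> I \<Longrightarrow> k' \<in> I \<Longrightarrow> k < k' \<Longrightarrow> m (Suc k) \<le> m k'"
  shows "cspan A t I \<subseteq> cspan A s (\<Union>k\<in>I. {m k..<m (Suc k)})"
proof
  fix w assume "w \<in> cspan A t I"
  then obtain ps where ps: "pattern I A ps" and w: "w = realize subst_c t ps"
    by (auto simp: cspan_iff)
  obtain Q where Q: "\<And>k. k \<in> I \<Longrightarrow> pattern {m k..<m (Suc k)} (Some ` A \<union> {None}) (Q k)"
    and Q_t: "\<And>k. k \<in> I \<Longrightarrow> t k = realize subst_v s (Q k)"
    using vspan_patterns[where B = "\<lambda>k. {m k..<m (Suc k)}", OF t] by metis
  have ps_I: "k \<in> I" if "k \<in> fst ` set ps" for k using ps that by (auto simp: pattern_def)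
  have "pattern (\<Union>k\<in>I. {m k..<m (Suc k)}) A (compose letter_c Q ps)"
    by (rule pattern_compose[where m = m and Q = Q, OF ps Q blocks]) (auto simp: letter_c_def split: option.split)
  moreover have "w = realize subst_c s (compose letter_c Q ps)"
    unfolding w using subst_c_concat subst_c_subst_v Q_t[OF ps_I] by (rule realize_compose)
  ultimately show "w \<in> cspan A s (\<Union>k\<in>I. {m k..<m (Suc k)})" by (auto simp: cspan_iff)
qed

lemma vspan_mono: "I \<subseteq> J \<Longrightarrow> vspan A s I \<subseteq> vspan A s J"
  unfolding vspan_def by blast

lemma cspan_mono: "I \<subseteq> J \<Longrightarrow> cspan A s I \<subseteq> cspan A s J"
  unfolding cspan_def by blast

lemma subst_v_None [simp]: "subst_v x None = x"
  by (induction x) (auto simp: subst_v_def split: option.split)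

lemma extracted_refl: "extracted A s s"
proof -
  have "s i \<in> vspan A s {i..<Suc i}" for i
    unfolding vspan_iff by (intro exI[of _ "[(i, None)]"]) (simp add: pattern_def realize_def)
  then show ?thesis unfolding extracted_def by (intro allI exI[of _ "\<lambda>i. i"]) auto
qed

lemma block_bounds_mono:
  assumes "\<forall>i\<le>l. m i < m (Suc i)" and "i \<le> j" and "j \<le> Suc l"
  shows "m i \<le> (m :: nat \<Rightarrow> nat) j"
proof (rule lift_Suc_mono_le_ivl[where f = m and N = "{..l}"])
  fix n assume "n \<in> {..l}"
  then show "m n \<le> m (Suc n)" using assms(1) by auto
next
  show "{i..<j} \<subseteq> {..l}" using assms(3) by auto
qed (fact assms(2))

(* Extraction is transitive: the blocks of t in w, pulled back through the blocks of w in
   s, give blocks of t in s. *)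
lemma extracted_trans:
  assumes tw: "extracted A t w" and ws: "extracted A w s"
  shows "extracted A t s"
  unfolding extracted_def
proof
  fix l
  from tw obtain m where m: "m 0 = 0" "\<forall>i\<le>l. m i < m (Suc i)"
    "\<forall>i\<le>l. t i \<in> vspan A w {m i..<m (Suc i)}" unfolding extracted_def by blast
  define L where "L = m (Suc l)"
  from ws obtain m' where m': "m' 0 = 0" "\<forall>i\<le>L. m' i < m' (Suc i)"
    "\<forall>i\<le>L. w i \<in> vspan A s {m' i..<m' (Suc i)}" unfolding extracted_def by blast
  have m_le: "m i \<le> m j" if "i \<le> j" "j \<le> Suc l" for i j
    using block_bounds_mono[OF m(2) that] .
  have m'_le: "m' i \<le> m' j" if "i \<le> j" "j \<le> Suc L" for i j
    using block_bounds_mono[OF m'(2) that] .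
  have composed: "m' (m i) < m' (m (Suc i)) \<and> t i \<in> vspan A s {m' (m i)..<m' (m (Suc i))}" if i: "i \<le> l" for i
  proof
    have block: "m i < m (Suc i)" "m (Suc i) \<le> L" using m(2) i m_le[of "Suc i" "Suc l"] L_def by auto
    have "m' (m i) < m' (Suc (m i))" using m'(2) block by auto
    also have "\<dots> \<le> m' (m (Suc i))" using block m'_le[of "Suc (m i)" "m (Suc i)"] by auto
    finally show "m' (m i) < m' (m (Suc i))" .
    let ?I = "{m i..<m (Suc i)}"
    have "t i \<in> vspan A w ?I" using m(3) i by blast
    also have "\<dots> \<subseteq> vspan A s (\<Union>k\<in>?I. {m' k..<m' (Suc k)})"
    proof (rule vspan_compose)
      show "w k \<in> vspan A s {m' k..<m' (Suc k)}" if "k \<in> ?I" for k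
        using m'(3) that block by auto
      show "m' (Suc k) \<le> m' k'" if "k \<in> ?I" "k' \<in> ?I" "k < k'" for k k'
        using that block m'_le[of "Suc k" k'] by auto
    qed
    also have "\<dots> \<subseteq> vspan A s {m' (m i)..<m' (m (Suc i))}"
    proof (rule vspan_mono, clarsimp)
      fix k j assume "m i \<le> k" "k < m (Suc i)" "m' k \<le> j" "j < m' (Suc k)"
      with block m'_le[of "m i" k] m'_le[of "Suc k" "m (Suc i)"] 
      show "m' (m i) \<le> j \<and> j < m' (m (Suc i))" by auto
    qed
    finally show "t i \<in> vspan A s {m' (m i)..<m' (m (Suc i))}" .
  qed
  show "\<exists>m''. m'' 0 = 0 \<and> (\<forall>i\<le>l. m'' i < m'' (Suc i)) \<and>
      (\<forall>i\<le>l. t i \<in> vspan A s {m'' i..<m'' (Suc i)})"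
    using m(1) m'(1) composed by (intro exI[of _ "\<lambda>i. m' (m i)"]) simp
qed

(* The constant span shrinks along extraction: a constant-span word of t uses only finitely
   many t_k, and those are covered by finitely many blocks of the extraction. *)
lemma cspan_extracted:
  assumes ts: "extracted A t s"
  shows "cspan A t UNIV \<subseteq> cspan A s UNIV"
proof
  fix w assume "w \<in> cspan A t UNIV"
  then obtain ps where ps: "pattern UNIV A ps" and w: "w = realize subst_c t ps"
    by (auto simp: cspan_iff)
  define l where "l = Max (fst ` set ps)"
  have "pattern {..l} A ps" using ps by (force simp: pattern_def l_def intro: Max_ge)
  hence "w \<in> cspan A t {..l}" using w by (auto simp: cspan_iff)
  from ts obtain m where m: "\<forall>i\<le>l. m i < m (Suc i)" "\<forall>i\<le>l. t i \<in> vspan A s {m i..<m (Suc i)}"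
    unfolding extracted_def by blast
  have "cspan A t {..l} \<subseteq> cspan A s (\<Union>k\<in>{..l}. {m k..<m (Suc k)})"
  proof (rule cspan_compose)
    show "t k \<in> vspan A s {m k..<m (Suc k)}" if "k \<in> {..l}" for k using m(2) that by simp
    show "m (Suc k) \<le> m k'" if "k \<in> {..l}" "k' \<in> {..l}" "k < k'" for k k'
      using block_bounds_mono[OF m(1), of "Suc k" k'] that by simp
  qed
  also have "\<dots> \<subseteq> cspan A s UNIV" by (rule cspan_mono) simp
  finally show "w \<in> cspan A s UNIV" using \<open>w \<in> cspan A t {..l}\<close> by blast
qed

lemma avoid_finite_union:
  assumes "finite K" and "is_vseq A s"
    and "\<And>i t. i \<in> K \<Longrightarrow> is_vseq A t \<Longrightarrow> extracted A t s \<Longrightarrow> \<not> large A (Es i) t"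
  shows "\<exists>w. is_vseq A w \<and> extracted A w s \<and> (\<Union>i\<in>K. Es i) \<inter> cspan A w UNIV = {}"
  using assms(1,3)
proof (induction K rule: finite_induct)
  case empty
  then show ?case using assms(2) extracted_refl by blast
next
  case (insert i K)
  then obtain w where w: "is_vseq A w" "extracted A w s" "(\<Union>j\<in>K. Es j) \<inter> cspan A w UNIV = {}"
    by blast
  have "\<not> large A (Es i) w" using insert.prems[of i w] w by simp
  then obtain w' where w': "is_vseq A w'" "extracted A w' w" "Es i \<inter> cspan A w' UNIV = {}"
    unfolding large_def by blast
  have "(\<Union>j\<in>insert i K. Es j) \<inter> cspan A w' UNIV = {}"
    using w(3) w'(3) cspan_extracted[OF w'(2)] by blast
  with w'(1) extracted_trans[OF w'(2) w(2)] show ?case by blast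
qed

lemma large_finite_union:
  assumes "finite K" and "is_vseq A s" and "large A (\<Union>i\<in>K. Es i) s"
  shows "\<exists>i\<in>K. \<exists>t. is_vseq A t \<and> extracted A t s \<and> large A (Es i) t"
proof (rule ccontr)
  assume "\<not> ?thesis"
  then obtain w where "is_vseq A w" "extracted A w s" "(\<Union>i\<in>K. Es i) \<inter> cspan A w UNIV = {}"
    using avoid_finite_union[OF assms(1,2), of Es] by blast
  with assms(3) show False unfolding large_def by blast
qed

theorem fact2p5:
  fixes A :: "'a set" and E :: "'a list set" and s :: "nat \<Rightarrow> 'a option list"
    and r :: nat and Es :: "nat \<Rightarrow> 'a list set"
  assumes "finite A" and "A \<noteq> {}"
    and "\<forall>w\<in>E. is_word A w"
    and "is_vseq A s"
    and "large A E s"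
    and "r \<ge> 2"
    and "E = (\<Union>i\<in>{1..r}. Es i)"
  shows "\<exists>i\<in>{1..r}. \<exists>t. is_vseq A t \<and> extracted A t s \<and> large A (Es i) t"
  using large_finite_union[of "{1..r}" A s Es] assms(4,5,7) by simp

end
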